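(* Let $\nu>0$, let $K$ be a smooth positive function, let $J(u)=\int K(u)\,du$ be an antiderivative of $K$, and let $A,B,D$ be constants with $D\neq 0$. (i) If $A\neq 0$ and $C(u)=D\,K(u)\left(AJ(u)+B\right)^{1/A}$ (on a range of $u$ where $AJ(u)+B>0$), then the equation $C(u)u_t=z^{-\nu}\left(K(u)z^{\nu}u_z\right)_z$ admits the Lie point symmetry generator $$Y_3=z\partial_z-2\,\frac{AJ(u)+B}{K(u)}\,\partial_u .$$ (ii) If $B\neq 0$ and $C(u)=D\,K(u)\exp\!\left(\frac{1}{B}J(u)\right)$, then the same equation admits the generator $Y_3=z\partial_z-\frac{2B}{K(u)}\partial_u$.
   Context: Here $u=u(z,t)$ with $z>0$, $t>0$. A vector field $Y=\xi\partial_z+\tau\partial_t+\eta\partial_u$ (coefficients depending on $z,t,u$) is an admitted Lie point symmetry generator of the equation if its second prolongation annihilates $C(u)u_t-K'(u)u_z^2-K(u)u_{zz}-\frac{\nu}{z}K(u)u_z$ on the solution manifold of the equation (equivalently, the one-parameter local group it generates maps solutions to solutions). *)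

theory Defs
  imports "HOL-Analysis.Analysis"
begin

definition pdz :: "(real \<Rightarrow> real \<Rightarrow> real \<Rightarrow> real) \<Rightarrow> real \<Rightarrow> real \<Rightarrow> real \<Rightarrow> real" where
  "pdz f z t u = deriv (\<lambda>s. f s t u) z"

definition pdt :: "(real \<Rightarrow> real \<Rightarrow> real \<Rightarrow> real) \<Rightarrow> real \<Rightarrow> real \<Rightarrow> real \<Rightarrow> real" where
  "pdt f z t u = deriv (\<lambda>s. f z s u) t"

definition pdu :: "(real \<Rightarrow> real \<Rightarrow> real \<Rightarrow> real) \<Rightarrow> real \<Rightarrow> real \<Rightarrow> real \<Rightarrow> real" where
  "pdu f z t u = deriv (\<lambda>s. f z t s) u"

text \<open>Prolongation coefficients (standard formulas, cf. Olver) of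
  Y = xi d_z + tau d_t + eta d_u, evaluated at the jet point
  (z, t, u, u_z, u_t, u_zz, u_zt).\<close>

definition phi_z where
  "phi_z xi tau eta z t u uz ut =
     pdz eta z t u + (pdu eta z t u - pdz xi z t u) * uz - pdz tau z t u * ut
     - pdu xi z t u * uz^2 - pdu tau z t u * uz * ut"

definition phi_t where
  "phi_t xi tau eta z t u uz ut =
     pdt eta z t u - pdt xi z t u * uz + (pdu eta z t u - pdt tau z t u) * ut
     - pdu xi z t u * uz * ut - pdu tau z t u * ut^2"

definition phi_zz where
  "phi_zz xi tau eta z t u uz ut uzz uzt =
     pdz (pdz eta) z t u
     + (2 * pdu (pdz eta) z t u - pdz (pdz xi) z t u) * uz
     - pdz (pdz tau) z t u * ut
     + (pdu (pdu eta) z t u - 2 * pdu (pdz xi) z t u) * uz^2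
     - 2 * pdu (pdz tau) z t u * uz * ut
     - pdu (pdu xi) z t u * uz^3
     - pdu (pdu tau) z t u * uz^2 * ut
     + (pdu eta z t u - 2 * pdz xi z t u) * uzz
     - 2 * pdz tau z t u * uzt
     - 3 * pdu xi z t u * uz * uzz
     - pdu tau z t u * ut * uzz
     - 2 * pdu tau z t u * uz * uzt"

text \<open>A second-order equation F(z,t,u,u_z,u_t,u_zz) = 0 and the action of the
  second prolongation of Y on F (F does not depend on u_zt, u_tt).\<close>

type_synonym jetfun = "real \<Rightarrow> real \<Rightarrow> real \<Rightarrow> real \<Rightarrow> real \<Rightarrow> real \<Rightarrow> real"

definition pr2 :: "jetfun \<Rightarrow> (real \<Rightarrow> real \<Rightarrow> real \<Rightarrow> real) \<Rightarrow> (real \<Rightarrow> real \<Rightarrow> real \<Rightarrow> real)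
    \<Rightarrow> (real \<Rightarrow> real \<Rightarrow> real \<Rightarrow> real) \<Rightarrow> real \<Rightarrow> real \<Rightarrow> real \<Rightarrow> real \<Rightarrow> real \<Rightarrow> real \<Rightarrow> real \<Rightarrow> real" where
  "pr2 F xi tau eta z t u uz ut uzz uzt =
     xi z t u * deriv (\<lambda>s. F s t u uz ut uzz) z
     + tau z t u * deriv (\<lambda>s. F z s u uz ut uzz) t
     + eta z t u * deriv (\<lambda>s. F z t s uz ut uzz) u
     + phi_z xi tau eta z t u uz ut * deriv (\<lambda>s. F z t u s ut uzz) uz
     + phi_t xi tau eta z t u uz ut * deriv (\<lambda>s. F z t u uz s uzz) ut
     + phi_zz xi tau eta z t u uz ut uzz uzt * deriv (\<lambda>s. F z t u uz ut s) uzz"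

definition admits_symmetry :: "jetfun \<Rightarrow> (real \<Rightarrow> real \<Rightarrow> real \<Rightarrow> bool)
    \<Rightarrow> (real \<Rightarrow> real \<Rightarrow> real \<Rightarrow> real) \<Rightarrow> (real \<Rightarrow> real \<Rightarrow> real \<Rightarrow> real)
    \<Rightarrow> (real \<Rightarrow> real \<Rightarrow> real \<Rightarrow> real) \<Rightarrow> bool" where
  "admits_symmetry F Dom xi tau eta \<longleftrightarrow>
     (\<forall>z t u uz ut uzz uzt. Dom z t u \<longrightarrow> F z t u uz ut uzz = 0 \<longrightarrow>
        pr2 F xi tau eta z t u uz ut uzz uzt = 0)"

text \<open>The equation C(u) u_t - K'(u) u_z^2 - K(u) u_zz - (nu/z) K(u) u_z = 0,
  i.e. C(u) u_t = z^(-nu) (K(u) z^nu u_z)_z.\<close>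

definition eqF :: "(real \<Rightarrow> real) \<Rightarrow> (real \<Rightarrow> real) \<Rightarrow> real \<Rightarrow> jetfun" where
  "eqF C K \<nu> z t u uz ut uzz =
     C u * ut - deriv K u * uz^2 - K u * uzz - \<nu> / z * K u * uz"

end

theory Submission
  imports Defs
begin

text \<open>For a generator z d_z + \<eta>(u) d_u, eliminating u_zz by the equation turns pr^(2) Y F into
  a combination of u_t and u_z^2 whose two coefficients are the determining equations. With
  \<eta> = -2 P / K and P' = a K we have (\<eta> K)' = -2 a K, which makes the u_z^2 coefficient vanish
  identically, while the u_t coefficient vanishes iff C'/C = K'/K + K/P, i.e. C = D K exp (\<integral> K/P).
  For P = A J + B this is C = D K P^(1/A), and for P = B it is C = D K exp (J/B).\<close>

lemma pdz_fun_u [simp]: "pdz (\<lambda>z t u. f u) = (\<lambda>z t u. 0)"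
  by (simp add: pdz_def fun_eq_iff)

lemma pdt_fun_u [simp]: "pdt (\<lambda>z t u. f u) = (\<lambda>z t u. 0)"
  by (simp add: pdt_def fun_eq_iff)

lemma pdu_fun_u [simp]: "pdu (\<lambda>z t u. f u) = (\<lambda>z t u. deriv f u)"
  by (simp add: pdu_def fun_eq_iff)

lemma pdz_coord_z [simp]: "pdz (\<lambda>z t u. z) = (\<lambda>z t u. 1)"
  by (simp add: pdz_def fun_eq_iff)

lemma pdt_coord_z [simp]: "pdt (\<lambda>z t u. z) = (\<lambda>z t u. 0)"
  by (simp add: pdt_def fun_eq_iff)

lemma pdu_coord_z [simp]: "pdu (\<lambda>z t u. z) = (\<lambda>z t u. 0)"
  by (simp add: pdu_def fun_eq_iff)

lemma pr2_eqF_dilation: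
  fixes C K \<eta> :: "real \<Rightarrow> real"
  assumes C': "(C has_real_derivative C1) (at u)"
    and K': "K differentiable (at u)" and K'': "(deriv K has_real_derivative K2) (at u)"
    and z: "z \<noteq> 0"
  shows "pr2 (eqF C K \<nu>) (\<lambda>z t u. z) (\<lambda>z t u. 0) (\<lambda>z t u. \<eta> u) z t u uz ut uzz uzt =
    z * (\<nu> / z^2 * K u * uz)
    + \<eta> u * (C1 * ut - K2 * uz^2 - deriv K u * uzz - \<nu> / z * deriv K u * uz)
    + (deriv \<eta> u - 1) * uz * (- 2 * deriv K u * uz - \<nu> / z * K u)
    + deriv \<eta> u * ut * C u
    - (deriv (deriv \<eta>) u * uz^2 + (deriv \<eta> u - 2) * uzz) * K u"
proof -
  have K1: "(K has_real_derivative deriv K u) (at u)"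
    using K' by (simp add: DERIV_deriv_iff_real_differentiable)
  have F_z: "deriv (\<lambda>s. eqF C K \<nu> s t u uz ut uzz) z = \<nu> / z^2 * K u * uz"
    unfolding eqF_def using z
    by (intro DERIV_imp_deriv) (auto intro!: derivative_eq_intros simp: field_simps power2_eq_square)
  have F_t: "deriv (\<lambda>s. eqF C K \<nu> z s u uz ut uzz) t = 0"
    unfolding eqF_def by simp
  have F_u: "deriv (\<lambda>s. eqF C K \<nu> z t s uz ut uzz) u =
      C1 * ut - K2 * uz^2 - deriv K u * uzz - \<nu> / z * deriv K u * uz"
    unfolding eqF_def using C' K1 K'' z
    by (intro DERIV_imp_deriv) (auto intro!: derivative_eq_intros)
  have F_uz: "deriv (\<lambda>s. eqF C K \<nu> z t u s ut uzz) uz = - 2 * deriv K u * uz - \<nu> / z * K u"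
    unfolding eqF_def using z by (intro DERIV_imp_deriv) (auto intro!: derivative_eq_intros)
  have F_ut: "deriv (\<lambda>s. eqF C K \<nu> z t u uz s uzz) ut = C u"
    unfolding eqF_def using z by (intro DERIV_imp_deriv) (auto intro!: derivative_eq_intros)
  have F_uzz: "deriv (\<lambda>s. eqF C K \<nu> z t u uz ut s) uzz = - K u"
    unfolding eqF_def using z by (intro DERIV_imp_deriv) (auto intro!: derivative_eq_intros)
  show ?thesis
    by (simp add: pr2_def phi_z_def phi_t_def phi_zz_def F_z F_t F_u F_uz F_ut F_uzz algebra_simps)
qed

lemma pr2_eqF_dilation_on_solutions:
  fixes c c1 k k1 k2 \<eta> \<eta>1 \<eta>2 :: real
  assumes k: "k \<noteq> 0" and z: "z \<noteq> 0"
    and F: "c * ut - k1 * uz^2 - k * uzz - \<nu> / z * k * uz = 0"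
  \<comment> \<open>l is the common coefficient of u_zz and \<nu> u_z / z, which the equation trades for u_t and u_z^2\<close>
  defines "l \<equiv> 2 * k - \<eta> * k1 - \<eta>1 * k"
  shows "z * (\<nu> / z^2 * k * uz)
    + \<eta> * (c1 * ut - k2 * uz^2 - k1 * uzz - \<nu> / z * k1 * uz)
    + (\<eta>1 - 1) * uz * (- 2 * k1 * uz - \<nu> / z * k)
    + \<eta>1 * ut * c
    - (\<eta>2 * uz^2 + (\<eta>1 - 2) * uzz) * k
    = ut * (\<eta> * c1 + \<eta>1 * c + l * c / k)
      - uz^2 * (\<eta> * k2 + 2 * \<eta>1 * k1 + \<eta>2 * k - 2 * k1 + l * k1 / k)"
proof -
  have uzz: "uzz = (c * ut - k1 * uz^2 - \<nu> / z * k * uz) / k"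
    using F k by (simp add: field_simps)
  show ?thesis
    unfolding uzz l_def using k z by (simp add: field_simps power2_eq_square)
qed

lemma deriv_dilation_coefficient:
  fixes K P :: "real \<Rightarrow> real"
  assumes K': "\<And>x. (K has_real_derivative deriv K x) (at x)"
    and K'': "\<And>x. (deriv K has_real_derivative deriv (deriv K) x) (at x)"
    and K_nz: "\<And>x. K x \<noteq> 0"
    and P: "\<And>x. (P has_real_derivative a * K x) (at x)"
  shows "deriv (\<lambda>u. - 2 * P u / K u) = (\<lambda>x. - 2 * a + 2 * P x * deriv K x / (K x)^2)"
    and "deriv (deriv (\<lambda>u. - 2 * P u / K u)) x =
      2 * (a * K x * deriv K x + P x * deriv (deriv K) x) / (K x)^2 - 4 * P x * (deriv K x)^2 / (K x)^3"
proof -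
  have "((\<lambda>u. - 2 * P u / K u) has_real_derivative - 2 * a + 2 * P x * deriv K x / (K x)^2) (at x)" for x
    using K' P K_nz[of x]
    by (auto intro!: derivative_eq_intros simp: field_simps power2_eq_square)
  then show \<eta>': "deriv (\<lambda>u. - 2 * P u / K u) = (\<lambda>x. - 2 * a + 2 * P x * deriv K x / (K x)^2)"
    using DERIV_imp_deriv by blast
  have "((\<lambda>x. - 2 * a + 2 * P x * deriv K x / (K x)^2) has_real_derivative
      2 * (a * K x * deriv K x + P x * deriv (deriv K) x) / (K x)^2
      - 4 * P x * (deriv K x)^2 / (K x)^3) (at x)"
    using K' K'' P K_nz[of x]
    by (auto intro!: derivative_eq_intros simp: field_simps power2_eq_square power3_eq_cube)
  then show "deriv (deriv (\<lambda>u. - 2 * P u / K u)) x =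
      2 * (a * K x * deriv K x + P x * deriv (deriv K) x) / (K x)^2 - 4 * P x * (deriv K x)^2 / (K x)^3"
    unfolding \<eta>' by (rule DERIV_imp_deriv)
qed

lemma admits_symmetry_dilation:
  fixes C K P :: "real \<Rightarrow> real" and Dom :: "real \<Rightarrow> real \<Rightarrow> real \<Rightarrow> bool"
  assumes K1: "\<And>x. K differentiable (at x)"
    and K2: "\<And>x. deriv K differentiable (at x)"
    and K_nz: "\<And>x. K x \<noteq> 0"
    and P: "\<And>x. (P has_real_derivative a * K x) (at x)"
    and Dom_z: "\<And>z t u. Dom z t u \<Longrightarrow> z \<noteq> 0"
    and Dom_P: "\<And>z t u. Dom z t u \<Longrightarrow> P u \<noteq> 0"
    and Dom_C: "\<And>z t u. Dom z t u \<Longrightarrow>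
      (C has_real_derivative C u * (deriv K u / K u + K u / P u)) (at u)"
  shows "admits_symmetry (eqF C K \<nu>) Dom (\<lambda>z t u. z) (\<lambda>z t u. 0) (\<lambda>z t u. - 2 * P u / K u)"
  unfolding admits_symmetry_def
proof (intro allI impI)
  fix z t u uz ut uzz uzt
  assume "Dom z t u" and F: "eqF C K \<nu> z t u uz ut uzz = 0"
  then have z: "z \<noteq> 0" and P_nz: "P u \<noteq> 0"
    and C': "(C has_real_derivative C u * (deriv K u / K u + K u / P u)) (at u)"
    using Dom_z Dom_P Dom_C by auto
  have K': "(K has_real_derivative deriv K x) (at x)" for x
    using K1 by (simp add: DERIV_deriv_iff_real_differentiable)
  have K'': "(deriv K has_real_derivative deriv (deriv K) x) (at x)" for x
    using K2 by (simp add: DERIV_deriv_iff_real_differentiable)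
  let ?\<eta> = "\<lambda>u. - 2 * P u / K u"
  have "pr2 (eqF C K \<nu>) (\<lambda>z t u. z) (\<lambda>z t u. 0) (\<lambda>z t u. ?\<eta> u) z t u uz ut uzz uzt
    = ut * (?\<eta> u * (C u * (deriv K u / K u + K u / P u)) + deriv ?\<eta> u * C u
             + (2 * K u - ?\<eta> u * deriv K u - deriv ?\<eta> u * K u) * C u / K u)
      - uz^2 * (?\<eta> u * deriv (deriv K) u + 2 * deriv ?\<eta> u * deriv K u
             + deriv (deriv ?\<eta>) u * K u - 2 * deriv K u
             + (2 * K u - ?\<eta> u * deriv K u - deriv ?\<eta> u * K u) * deriv K u / K u)"
    unfolding pr2_eqF_dilation[OF C' K1 K'' z]
    by (rule pr2_eqF_dilation_on_solutions[OF K_nz z F[unfolded eqF_def]])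
  also have "\<dots> = 0"
    using K_nz[of u] P_nz
    unfolding deriv_dilation_coefficient(2)[OF K' K'' K_nz P]
    unfolding deriv_dilation_coefficient(1)[OF K' K'' K_nz P]
    by (simp add: field_simps power2_eq_square power3_eq_cube)
  finally show "pr2 (eqF C K \<nu>) (\<lambda>z t u. z) (\<lambda>z t u. 0) (\<lambda>z t u. ?\<eta> u) z t u uz ut uzz uzt = 0" .
qed

lemma has_real_derivative_K_powr_antiderivative:
  fixes K J :: "real \<Rightarrow> real"
  assumes K: "(K has_real_derivative K1) (at u)" and J: "(J has_real_derivative K u) (at u)"
    and A: "A \<noteq> 0" and pos: "A * J u + B > 0" and K_nz: "K u \<noteq> 0"
  shows "((\<lambda>u. D * K u * (A * J u + B) powr (1 / A)) has_real_derivative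
    D * K u * (A * J u + B) powr (1 / A) * (K1 / K u + K u / (A * J u + B))) (at u)"
proof -
  have deriv: "((\<lambda>u. D * K u * (A * J u + B) powr (1 / A)) has_real_derivative
      D * (K1 * (A * J u + B) powr (1 / A)
           + K u * (1 / A * (A * J u + B) powr (1 / A - 1) * (A * K u)))) (at u)"
    using K J pos by (auto intro!: derivative_eq_intros simp: algebra_simps)
  have pow: "(A * J u + B) powr (1 / A - 1) = (A * J u + B) powr (1 / A) / (A * J u + B)"
    using pos by (simp add: powr_diff)
  have alg: "D * (K1 * q + K u * (1 / A * (q / p) * (A * K u))) = D * K u * q * (K1 / K u + K u / p)"
    if "p \<noteq> 0" for p q
    using A K_nz that by (simp add: field_simps)
  show ?thesis
    using deriv unfolding pow alg[OF pos[THEN less_imp_neq, symmetric]] .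
qed

lemma has_real_derivative_K_exp_antiderivative:
  fixes K J :: "real \<Rightarrow> real"
  assumes "(K has_real_derivative K1) (at u)" and "(J has_real_derivative K u) (at u)"
    and "B \<noteq> 0" and "K u \<noteq> 0"
  shows "((\<lambda>u. D * K u * exp (J u / B)) has_real_derivative
    D * K u * exp (J u / B) * (K1 / K u + K u / B)) (at u)"
  using assms by (auto intro!: derivative_eq_intros simp: field_simps)

theorem mainTheorem2:
  fixes \<nu> A B D :: real and K J :: "real \<Rightarrow> real"
  assumes nu_pos: "\<nu> > 0"
    and K_smooth: "\<forall>n x. ((deriv ^^ n) K) differentiable (at x)"
    and K_pos: "\<forall>u. K u > 0"
    and J_antideriv: "\<forall>u. (J has_real_derivative K u) (at u)"
    and D_nz: "D \<noteq> 0"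
  shows "(A \<noteq> 0 \<longrightarrow>
           admits_symmetry (eqF (\<lambda>u. D * K u * (A * J u + B) powr (1 / A)) K \<nu>)
             (\<lambda>z t u. z > 0 \<and> t > 0 \<and> A * J u + B > 0)
             (\<lambda>z t u. z) (\<lambda>z t u. 0) (\<lambda>z t u. - 2 * (A * J u + B) / K u))
       \<and> (B \<noteq> 0 \<longrightarrow>
           admits_symmetry (eqF (\<lambda>u. D * K u * exp (J u / B)) K \<nu>)
             (\<lambda>z t u. z > 0 \<and> t > 0)
             (\<lambda>z t u. z) (\<lambda>z t u. 0) (\<lambda>z t u. - 2 * B / K u))"
proof -
  have K1: "K differentiable (at x)" for x
    using K_smooth by (metis funpow_0)
  have K2: "deriv K differentiable (at x)" for x
    using K_smooth[rule_format, of 1] by simp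
  have K': "(K has_real_derivative deriv K x) (at x)" for x
    using K1 by (simp add: DERIV_deriv_iff_real_differentiable)
  have K_nz: "K x \<noteq> 0" for x
    using K_pos by (metis less_irrefl)
  show ?thesis
    using J_antideriv K_nz
    apply (intro conjI impI)
    subgoal
      by (intro admits_symmetry_dilation[where a = A] K1 K2 K_nz
          has_real_derivative_K_powr_antiderivative[OF K'])
        (auto intro!: derivative_eq_intros)
    subgoal
      by (intro admits_symmetry_dilation[where a = 0] K1 K2 K_nz
          has_real_derivative_K_exp_antiderivative[OF K'])
        (auto intro!: derivative_eq_intros)
    done
qed

end
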